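(* Let $T$ be a strongly consistent $\mathcal{L}$-theory in $RGL^*$ and $\varphi,\psi$ $\mathcal{L}$-sentences. Then at least one of $T\cup\{\varphi\to\psi\}$ and $T\cup\{\psi\to\varphi\}$ is strongly consistent.
   Context: $\mathcal{L}$ is a first-order language with countably many predicate, function and constant symbols. Formulas of $RGL^*$ are built from atomic formulas and the nullary connectives $\bar r$ ($r\in[0,1]\cap\mathbb{Q}$, including $\bar0,\bar1$) by $\wedge,\to,\forall,\exists$; $\neg\varphi:=\varphi\to\bar1$, $\varphi\vee\psi:=((\varphi\to\psi)\to\psi)\wedge((\psi\to\varphi)\to\varphi)$, $\varphi\leftrightarrow\psi:=(\varphi\to\psi)\wedge(\psi\to\varphi)$. Proof system $\vdash$: all instances of (G1) $(\varphi\to\psi)\to((\psi\to\chi)\to(\varphi\to\chi))$; (G2) $(\varphi\wedge\psi)\to\varphi$; (G3) $(\varphi\wedge\psi)\to(\psi\wedge\varphi)$; (G4) $\varphi\to(\varphi\wedge\varphi)$; (G5) $(\varphi\to(\psi\to\chi))\leftrightarrow((\varphi\wedge\psi)\to\chi)$; (G6) $((\varphi\to\psi)\to\chi)\to(((\psi\to\varphi)\to\chi)\to\chi)$; (G7) $\bar1\to\varphi$; (G$\forall$1) $(\forall x\,\varphi(x))\to\varphi(t)$; (G$\forall$2) $\forall x(\psi\to\varphi(x))\to(\psi\to\forall x\,\varphi(x))$; (G$\forall$3) $\forall x(\psi\vee\varphi(x))\to(\psi\vee\forall x\,\varphi(x))$; (G$\exists$1) $\varphi(t)\to\exists x\,\varphi(x)$;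 (G$\exists$2) $\exists x(\psi\to\varphi(x))\to(\psi\to\exists x\,\varphi(x))$ (with $t$ substitutable for $x$ and $x$ not free in $\psi$); (RGL1) $(\bar r\wedge\bar s)\leftrightarrow\overline{\max\{r,s\}}$; (RGL2) $\bar r\to\bar s$ if $r\ge s$, $(\bar r\to\bar s)\leftrightarrow\bar s$ if $r<s$; (RGL3) $\neg\neg\bar r$ for $r<1$. Rules: modus ponens and generalization. A theory (set of sentences) $T$ is strongly consistent if $T\nvdash\bar r$ for every rational $r\in(0,1]$. *)

theory Defs
  imports Complex_Main "HOL-Library.Countable"
begin

typedef urat = "{r :: rat. 0 \<le> r \<and> r \<le> 1}"
  by (rule exI[of _ 0]) simp

definition umax :: "urat \<Rightarrow> urat \<Rightarrow> urat" where
  "umax r s = Abs_urat (max (Rep_urat r) (Rep_urat s))"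

definition uzero :: urat where "uzero = Abs_urat 0"
definition uone :: urat where "uone = Abs_urat 1"

datatype 'f trm = Var nat | Fn 'f "'f trm list"

datatype ('f, 'p) form =
    Atom 'p "'f trm list"
  | Cst urat
  | And "('f, 'p) form" "('f, 'p) form"
  | Imp "('f, 'p) form" "('f, 'p) form"
  | All nat "('f, 'p) form"
  | Ex nat "('f, 'p) form"

definition Neg :: "('f, 'p) form \<Rightarrow> ('f, 'p) form" where
  "Neg \<phi> = Imp \<phi> (Cst uone)"

definition Or :: "('f, 'p) form \<Rightarrow> ('f, 'p) form \<Rightarrow> ('f, 'p) form" where
  "Or \<phi> \<psi> = And (Imp (Imp \<phi> \<psi>) \<psi>) (Imp (Imp \<psi> \<phi>) \<phi>)"

definition Iff :: "('f, 'p) form \<Rightarrow> ('f, 'p) form \<Rightarrow> ('f, 'p) form" where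
  "Iff \<phi> \<psi> = And (Imp \<phi> \<psi>) (Imp \<psi> \<phi>)"

fun fvt :: "'f trm \<Rightarrow> nat set" where
  "fvt (Var x) = {x}"
| "fvt (Fn f ts) = (\<Union>t\<in>set ts. fvt t)"

fun fv :: "('f, 'p) form \<Rightarrow> nat set" where
  "fv (Atom P ts) = (\<Union>t\<in>set ts. fvt t)"
| "fv (Cst r) = {}"
| "fv (And \<phi> \<psi>) = fv \<phi> \<union> fv \<psi>"
| "fv (Imp \<phi> \<psi>) = fv \<phi> \<union> fv \<psi>"
| "fv (All x \<phi>) = fv \<phi> - {x}"
| "fv (Ex x \<phi>) = fv \<phi> - {x}"

definition sentence :: "('f, 'p) form \<Rightarrow> bool" where
  "sentence \<phi> \<longleftrightarrow> fv \<phi> = {}"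

fun substt :: "nat \<Rightarrow> 'f trm \<Rightarrow> 'f trm \<Rightarrow> 'f trm" where
  "substt x t (Var y) = (if y = x then t else Var y)"
| "substt x t (Fn f ts) = Fn f (map (substt x t) ts)"

fun subst :: "nat \<Rightarrow> 'f trm \<Rightarrow> ('f, 'p) form \<Rightarrow> ('f, 'p) form" where
  "subst x t (Atom P ts) = Atom P (map (substt x t) ts)"
| "subst x t (Cst r) = Cst r"
| "subst x t (And \<phi> \<psi>) = And (subst x t \<phi>) (subst x t \<psi>)"
| "subst x t (Imp \<phi> \<psi>) = Imp (subst x t \<phi>) (subst x t \<psi>)"
| "subst x t (All y \<phi>) = (if y = x then All y \<phi> else All y (subst x t \<phi>))"
| "subst x t (Ex y \<phi>) = (if y = x then Ex y \<phi> else Ex y (subst x t \<phi>))"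

fun substitutable :: "'f trm \<Rightarrow> nat \<Rightarrow> ('f, 'p) form \<Rightarrow> bool" where
  "substitutable t x (Atom P ts) = True"
| "substitutable t x (Cst r) = True"
| "substitutable t x (And \<phi> \<psi>) = (substitutable t x \<phi> \<and> substitutable t x \<psi>)"
| "substitutable t x (Imp \<phi> \<psi>) = (substitutable t x \<phi> \<and> substitutable t x \<psi>)"
| "substitutable t x (All y \<phi>) =
     (x \<notin> fv (All y \<phi>) \<or> (y \<notin> fvt t \<and> substitutable t x \<phi>))"
| "substitutable t x (Ex y \<phi>) =
     (x \<notin> fv (Ex y \<phi>) \<or> (y \<notin> fvt t \<and> substitutable t x \<phi>))"

inductive axiom :: "('f, 'p) form \<Rightarrow> bool" where
  G1: "axiom (Imp (Imp \<phi> \<psi>) (Imp (Imp \<psi> \<chi>) (Imp \<phi> \<chi>)))"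
| G2: "axiom (Imp (And \<phi> \<psi>) \<phi>)"
| G3: "axiom (Imp (And \<phi> \<psi>) (And \<psi> \<phi>))"
| G4: "axiom (Imp \<phi> (And \<phi> \<phi>))"
| G5: "axiom (Iff (Imp \<phi> (Imp \<psi> \<chi>)) (Imp (And \<phi> \<psi>) \<chi>))"
| G6: "axiom (Imp (Imp (Imp \<phi> \<psi>) \<chi>) (Imp (Imp (Imp \<psi> \<phi>) \<chi>) \<chi>))"
| G7: "axiom (Imp (Cst uone) \<phi>)"
| GAll1: "substitutable t x \<phi> \<Longrightarrow> axiom (Imp (All x \<phi>) (subst x t \<phi>))"
| GAll2: "x \<notin> fv \<psi> \<Longrightarrow> axiom (Imp (All x (Imp \<psi> \<phi>)) (Imp \<psi> (All x \<phi>)))"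
| GAll3: "x \<notin> fv \<psi> \<Longrightarrow> axiom (Imp (All x (Or \<psi> \<phi>)) (Or \<psi> (All x \<phi>)))"
| GEx1: "substitutable t x \<phi> \<Longrightarrow> axiom (Imp (subst x t \<phi>) (Ex x \<phi>))"
| GEx2: "x \<notin> fv \<psi> \<Longrightarrow> axiom (Imp (Ex x (Imp \<psi> \<phi>)) (Imp \<psi> (Ex x \<phi>)))"
| RGL1: "axiom (Iff (And (Cst r) (Cst s)) (Cst (umax r s)))"
| RGL2a: "Rep_urat r \<ge> Rep_urat s \<Longrightarrow> axiom (Imp (Cst r) (Cst s))"
| RGL2b: "Rep_urat r < Rep_urat s \<Longrightarrow> axiom (Iff (Imp (Cst r) (Cst s)) (Cst s))"
| RGL3: "Rep_urat r < 1 \<Longrightarrow> axiom (Neg (Neg (Cst r)))"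

inductive prv :: "('f, 'p) form set \<Rightarrow> ('f, 'p) form \<Rightarrow> bool" where
  Hyp: "\<phi> \<in> T \<Longrightarrow> prv T \<phi>"
| Ax: "axiom \<phi> \<Longrightarrow> prv T \<phi>"
| MP: "prv T \<phi> \<Longrightarrow> prv T (Imp \<phi> \<psi>) \<Longrightarrow> prv T \<psi>"
| Gen: "prv T \<phi> \<Longrightarrow> prv T (All x \<phi>)"

definition is_theory :: "('f, 'p) form set \<Rightarrow> bool" where
  "is_theory T \<longleftrightarrow> (\<forall>\<phi>\<in>T. sentence \<phi>)"

definition strongly_consistent :: "('f, 'p) form set \<Rightarrow> bool" where
  "strongly_consistent T \<longleftrightarrow> (\<forall>r. 0 < Rep_urat r \<longrightarrow> \<not> prv T (Cst r))"

end

theory Submission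
  imports Defs
begin

text \<open>If both extensions were strongly inconsistent, the deduction theorem (available for
  sentences, since generalization never binds a variable of the discharged hypothesis) would give
  \<open>T \<turnstile> (\<phi> \<rightarrow> \<psi>) \<rightarrow> r\<close> and \<open>T \<turnstile> (\<psi> \<rightarrow> \<phi>) \<rightarrow> s\<close> with \<open>r, s > 0\<close>. Both conclusions
  weaken to the constant \<open>min r s\<close>, and prelinearity (G6) then yields \<open>T \<turnstile> min r s\<close>.\<close>

lemma prv_imp_trans: "prv T (Imp A B) \<Longrightarrow> prv T (Imp B C) \<Longrightarrow> prv T (Imp A C)"
  by (meson prv.Ax prv.MP axiom.G1)

lemma prv_conjunct1: "prv T (And A B) \<Longrightarrow> prv T A"
  by (meson prv.Ax prv.MP axiom.G2)

lemma prv_conjunct2: "prv T (And A B) \<Longrightarrow> prv T B"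
  by (meson prv.Ax prv.MP axiom.G2 axiom.G3)

lemma prv_iffD1: "prv T (Iff A B) \<Longrightarrow> prv T A \<Longrightarrow> prv T B"
  unfolding Iff_def by (meson prv_conjunct1 prv.MP)

lemma prv_iffD2: "prv T (Iff A B) \<Longrightarrow> prv T B \<Longrightarrow> prv T A"
  unfolding Iff_def by (meson prv_conjunct2 prv.MP)

lemma prv_curry: "prv T (Imp (And A B) C) \<Longrightarrow> prv T (Imp A (Imp B C))"
  by (rule prv_iffD2[OF prv.Ax[OF axiom.G5]])

lemma prv_uncurry: "prv T (Imp A (Imp B C)) \<Longrightarrow> prv T (Imp (And A B) C)"
  by (rule prv_iffD1[OF prv.Ax[OF axiom.G5]])

lemma prv_imp_refl: "prv T (Imp A A)"
  by (meson prv_imp_trans prv.Ax axiom.G2 axiom.G4)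

lemma prv_imp_weaken: "prv T (Imp A (Imp B A))"
  by (meson prv_curry prv.Ax axiom.G2)

lemma prv_imp_mp:
  assumes "prv T (Imp X A)" and "prv T (Imp X (Imp A B))"
  shows "prv T (Imp X B)"
proof -
  have "prv T (Imp (Imp A B) (Imp X B))"
    using assms(1) prv.MP prv.Ax axiom.G1 by blast
  then have "prv T (Imp (And X X) B)"
    using assms(2) prv_imp_trans prv_uncurry by blast
  then show ?thesis
    using prv_imp_trans prv.Ax axiom.G4 by blast
qed

lemma deduction_theorem:
  assumes "prv (insert X T) B" and "sentence X"
  shows "prv T (Imp X B)"
  using assms
proof (induction "insert X T" B rule: prv.induct)
  case (Hyp \<phi>)
  then show ?case
    by (metis insert_iff prv_imp_refl prv_imp_weaken prv.Hyp prv.MP)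
next
  case (Ax \<phi>)
  then show ?case
    by (meson prv_imp_weaken prv.Ax prv.MP)
next
  case (MP \<phi> \<psi>)
  then show ?case
    using prv_imp_mp by blast
next
  case (Gen \<phi> x)
  have "x \<notin> fv X"
    using Gen.prems unfolding sentence_def by simp
  then show ?case
    using Gen prv.Gen prv.MP prv.Ax axiom.GAll2 by blast
qed

lemma not_strongly_consistent_insert:
  assumes "\<not> strongly_consistent (insert X T)" and "sentence X"
  obtains r where "0 < Rep_urat r" and "prv T (Imp X (Cst r))"
  using assms deduction_theorem unfolding strongly_consistent_def by blast

lemma prv_imp_Cst_mono:
  assumes "prv T (Imp A (Cst r))" and "Rep_urat s \<le> Rep_urat r"
  shows "prv T (Imp A (Cst s))"
  using assms prv_imp_trans prv.Ax axiom.RGL2a by blast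

lemma prv_by_prelinearity:
  assumes "prv T (Imp (Imp A B) C)" and "prv T (Imp (Imp B A) C)"
  shows "prv T C"
  using assms prv.MP prv.Ax[OF axiom.G6[of A B C]] by blast

theorem mainTheorem6:
  fixes T :: "('f::countable, 'p::countable) form set"
    and \<phi> \<psi> :: "('f, 'p) form"
  assumes "is_theory T"
    and "strongly_consistent T"
    and "sentence \<phi>"
    and "sentence \<psi>"
  shows "strongly_consistent (insert (Imp \<phi> \<psi>) T) \<or> strongly_consistent (insert (Imp \<psi> \<phi>) T)"
proof (rule ccontr)
  assume inconsistent: "\<not> ?thesis"
  have "sentence (Imp \<phi> \<psi>)" and "sentence (Imp \<psi> \<phi>)"
    using assms(3,4) unfolding sentence_def by simp_all
  with inconsistent obtain r s
    where r: "0 < Rep_urat r" "prv T (Imp (Imp \<phi> \<psi>) (Cst r))"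
      and s: "0 < Rep_urat s" "prv T (Imp (Imp \<psi> \<phi>) (Cst s))"
    by (metis not_strongly_consistent_insert)
  define t where "t = (if Rep_urat r \<le> Rep_urat s then r else s)"
  have "prv T (Imp (Imp \<phi> \<psi>) (Cst t))" and "prv T (Imp (Imp \<psi> \<phi>) (Cst t))"
    using prv_imp_Cst_mono[OF r(2)] prv_imp_Cst_mono[OF s(2)] unfolding t_def by auto
  then have "prv T (Cst t)"
    by (rule prv_by_prelinearity)
  moreover have "0 < Rep_urat t"
    using r(1) s(1) unfolding t_def by simp
  ultimately show False
    using assms(2) unfolding strongly_consistent_def by blast
qed

end
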